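(* Let $X$ be a complex Banach space and let $\mathcal{D}=\{X_n:n\ge1\}$ be a Schauder decomposition of $X$ which is not $R$-Schauder. Then: (a) there exists a sectorial operator $A$ on $X$ which is a $\mathcal{D}$-multiplier such that the set $\{e^{-tA^{-1}}:t\ge0\}$ is not $R$-bounded; (b) there exists a Ritt operator $T\in B(X)$ which is a $\mathcal{D}$-multiplier such that the set $\{T^n:n\ge0\}$ is not $R$-bounded.
   Context: $R$-boundedness: with $(\varepsilon_j)$ independent Rademacher variables on $(\Omega,\mathbb{P})$ and $\|\sum_{j=1}^k\varepsilon_j\otimes x_j\|_{R,X}=\int_\Omega\|\sum_j\varepsilon_j(u)x_j\|\,d\mathbb{P}(u)$, a set $F\subset B(X)$ is $R$-bounded if there is $K$ with $\|\sum_j\varepsilon_j\otimes T_j x_j\|_{R,X}\le K\|\sum_j\varepsilon_j\otimes x_j\|_{R,X}$ for all finite families $T_j\in F$, $x_j\in X$. A Schauder decomposition of $X$ is a sequence $\mathcal{D}=\{X_n:n\ge1\}$ of closed subspaces such that every $x\in X$ has a unique expansion $x=\sum_{n\ge1}x_n$ with $x_n\in X_n$; $p_n(x)=x_n$ and $P_N=\sum_{n=1}^Np_n$. $\mathcal{D}$ is $R$-Schauder if $\{P_N:N\ge1\}$ is $R$-bounded. A sectorial $\mathcal{D}$-multiplier is an operator $A$ of the form: for a nondecreasing sequence $(a_n)_{n\ge1}$ in $(0,\infty)$, $D(A)=\{x:\sum_na_np_n(x)\text{ converges}\}$, $Ax=\sum_na_np_n(x)$; such $A$ is sectorial of type $0$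 and invertible, with $A^{-1}\in B(X)$ given by $A^{-1}x=\sum_n a_n^{-1}p_n(x)$, and $(e^{-tA^{-1}})_{t\ge0}$ is the semigroup generated by $-A^{-1}$. A Ritt $\mathcal{D}$-multiplier is an operator $T(x)=\sum_{n\ge1}c_np_n(x)$ with $(c_n)$ a nondecreasing sequence in $(0,1)$; such $T$ is a Ritt operator, i.e. $\{T^n:n\ge0\}$ and $\{nT^n(I_X-T):n\ge1\}$ are bounded. *)

theory Defs
  imports "HOL-Analysis.Analysis"
begin

text \<open>A complex Banach space is modelled as a real Banach space (type class banach)
together with a complex structure J (multiplication by i): (a + ib) x = a x + b J x.\<close>
definition complex_structure :: "('a::real_normed_vector \<Rightarrow> 'a) \<Rightarrow> bool" where
  "complex_structure J \<longleftrightarrow> bounded_linear J \<and> (\<forall>x. J (J x) = - x)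
     \<and> (\<forall>\<theta> x. norm (cos \<theta> *\<^sub>R x + sin \<theta> *\<^sub>R J x) = norm x)"

definition closed_csubspace :: "('a::real_normed_vector \<Rightarrow> 'a) \<Rightarrow> 'a set \<Rightarrow> bool" where
  "closed_csubspace J S \<longleftrightarrow> closed S \<and> subspace S \<and> (\<forall>x\<in>S. J x \<in> S)"

text \<open>Schauder decomposition (indexed from 0 instead of 1).\<close>
definition schauder_decomposition ::
    "('a::real_normed_vector \<Rightarrow> 'a) \<Rightarrow> (nat \<Rightarrow> 'a set) \<Rightarrow> bool" where
  "schauder_decomposition J Xs \<longleftrightarrow> (\<forall>n. closed_csubspace J (Xs n)) \<and>
     (\<forall>x. \<exists>!u. (\<forall>n. u n \<in> Xs n) \<and> (\<lambda>N. \<Sum>n<N. u n) \<longlonglongrightarrow> x)"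

definition sd_coord :: "(nat \<Rightarrow> 'a::real_normed_vector set) \<Rightarrow> nat \<Rightarrow> 'a \<Rightarrow> 'a" where
  "sd_coord Xs n x = (THE u. (\<forall>m. u m \<in> Xs m) \<and> (\<lambda>N. \<Sum>m<N. u m) \<longlonglongrightarrow> x) n"

text \<open>Partial sum projections P_N = p_1 + ... + p_N (0-based: sum over n < N).\<close>
definition sd_partial :: "(nat \<Rightarrow> 'a::real_normed_vector set) \<Rightarrow> nat \<Rightarrow> 'a \<Rightarrow> 'a" where
  "sd_partial Xs N x = (\<Sum>n<N. sd_coord Xs n x)"

text \<open>Rademacher norm: integral over independent Rademacher variables, i.e. the average
over all sign vectors in {-1,1}^k.\<close>
definition rad_norm :: "nat \<Rightarrow> (nat \<Rightarrow> 'a::real_normed_vector) \<Rightarrow> real" where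
  "rad_norm k x = (\<Sum>e\<in>({..<k} \<rightarrow>\<^sub>E {-1::real, 1}). norm (\<Sum>j<k. e j *\<^sub>R x j)) / 2 ^ k"

definition R_bounded :: "('a::real_normed_vector \<Rightarrow> 'a) set \<Rightarrow> bool" where
  "R_bounded F \<longleftrightarrow> (\<exists>K. \<forall>k (T :: nat \<Rightarrow> 'a \<Rightarrow> 'a) (x :: nat \<Rightarrow> 'a).
      (\<forall>j<k. T j \<in> F) \<longrightarrow> rad_norm k (\<lambda>j. T j (x j)) \<le> K * rad_norm k x)"

definition R_schauder :: "('a::real_normed_vector \<Rightarrow> 'a) \<Rightarrow> (nat \<Rightarrow> 'a set) \<Rightarrow> bool" where
  "R_schauder J Xs \<longleftrightarrow> schauder_decomposition J Xs \<and> R_bounded {sd_partial Xs N | N. N \<ge> 1}"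

definition op_exp_neg :: "real \<Rightarrow> ('a::real_normed_vector \<Rightarrow> 'a) \<Rightarrow> 'a \<Rightarrow> 'a" where
  "op_exp_neg t B x = (\<Sum>k. ((- t) ^ k / fact k) *\<^sub>R (B ^^ k) x)"

end

theory Submission
  imports Defs
begin

text \<open>A multiplier \<open>\<Sum>\<^sub>n g\<^sub>n p\<^sub>n\<close> with monotone symbol within \<open>\<eta>\<close> of \<open>0\<close> for \<open>n \<le> M\<close> and of \<open>1\<close>
  for \<open>n > M\<close> is within \<open>O(M \<eta>)\<close> of \<open>I - P\<^sub>M\<^sub>+\<^sub>1\<close>. For \<open>a\<^sub>n = 4^(2n^2)\<close> the symbol \<open>exp(-t/a\<^sub>n)\<close>
  of \<open>exp(-t A\<^sup>-\<^sup>1)\<close> switches like this at \<open>t\<^sub>M = 4^(2M^2+3M+1)\<close> with \<open>\<eta> = 4^-(M+1)\<close>, and so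
  does \<open>c\<^sub>n^(2t\<^sub>M)\<close> for the Ritt operator with \<open>c\<^sub>n = 1 - 1/(2a\<^sub>n)\<close>. As the errors are summable,
  the contraction principle would transfer R-boundedness of the semigroup or of the powers of
  the Ritt operator to the partial sum projections \<open>P\<^sub>N\<close>.

  Multipliers with symbols of bounded variation are bounded by Abel summation, given that the
  \<open>P\<^sub>N\<close> are uniformly bounded; since they are not assumed continuous, this comes from Baire's
  theorem.\<close>

section \<open>Rademacher averages\<close>

abbreviation sign_vectors :: "nat \<Rightarrow> (nat \<Rightarrow> real) set" where
  "sign_vectors k \<equiv> {..<k} \<rightarrow>\<^sub>E {-1, 1}"

lemma rad_norm_nonneg: "rad_norm k x \<ge> 0"
  unfolding rad_norm_def by (intro divide_nonneg_pos sum_nonneg) auto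

lemma rad_norm_cong: "(\<And>j. j < k \<Longrightarrow> x j = y j) \<Longrightarrow> rad_norm k x = rad_norm k y"
  unfolding rad_norm_def by (intro arg_cong2[where f="(/)"] sum.cong refl arg_cong[where f=norm]) auto

lemma rad_norm_add_le: "rad_norm k (\<lambda>j. x j + y j) \<le> rad_norm k x + rad_norm k y"
proof -
  have "(\<Sum>e\<in>sign_vectors k. norm (\<Sum>j<k. e j *\<^sub>R (x j + y j)))
      \<le> (\<Sum>e\<in>sign_vectors k. norm (\<Sum>j<k. e j *\<^sub>R x j) + norm (\<Sum>j<k. e j *\<^sub>R y j))"
    by (intro sum_mono) (simp add: scaleR_add_right sum.distrib norm_triangle_ineq)
  then show ?thesis
    unfolding rad_norm_def by (simp add: sum.distrib add_divide_distrib[symmetric] divide_right_mono)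
qed

lemma rad_norm_minus: "rad_norm k (\<lambda>j. - x j) = rad_norm k x"
  unfolding rad_norm_def by (simp add: sum_negf)

lemma rad_norm_diff_le: "rad_norm k (\<lambda>j. x j - y j) \<le> rad_norm k x + rad_norm k y"
  using rad_norm_add_le[of k x "\<lambda>j. - y j"] by (simp add: rad_norm_minus)

lemma rad_norm_sum_le:
  assumes "finite I"
  shows "rad_norm k (\<lambda>j. \<Sum>i\<in>I. f i j) \<le> (\<Sum>i\<in>I. rad_norm k (f i))"
  using assms
proof (induction I rule: finite_induct)
  case empty
  then show ?case by (simp add: rad_norm_def)
next
  case (insert a I)
  then show ?case using rad_norm_add_le[of k "f a" "\<lambda>j. \<Sum>i\<in>I. f i j"] by simp
qed

lemma rad_norm_linear_le:
  assumes "linear L" and "\<And>v. norm (L v) \<le> C * norm v"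
  shows "rad_norm k (\<lambda>j. L (x j)) \<le> C * rad_norm k x"
proof -
  have "norm (\<Sum>j<k. e j *\<^sub>R L (x j)) \<le> C * norm (\<Sum>j<k. e j *\<^sub>R x j)" for e
    using assms(2)[of "\<Sum>j<k. e j *\<^sub>R x j"] by (simp add: linear_sum[OF assms(1)] linear_scale[OF assms(1)])
  then have "(\<Sum>e\<in>sign_vectors k. norm (\<Sum>j<k. e j *\<^sub>R L (x j)))
      \<le> C * (\<Sum>e\<in>sign_vectors k. norm (\<Sum>j<k. e j *\<^sub>R x j))"
    by (simp add: sum_mono sum_distrib_left)
  then show ?thesis
    unfolding rad_norm_def by (simp add: divide_right_mono)
qed

text \<open>Flipping the signs outside \<open>Q\<close> is an involution of the sign vectors, and the masked
  sum is the average of the original and the flipped one.\<close>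
lemma rad_norm_mask_le: "rad_norm k (\<lambda>j. if Q j then x j else 0) \<le> rad_norm k x"
proof -
  define flip where "flip e = (\<lambda>j. if j < k \<and> \<not> Q j then - e j else e j)" for e :: "nat \<Rightarrow> real"
  define S where "S e = (\<Sum>j<k. e j *\<^sub>R x j)" for e
  have masked: "(\<Sum>j<k. e j *\<^sub>R (if Q j then x j else 0)) = (1/2) *\<^sub>R (S e + S (flip e))" for e
  proof -
    have "e j *\<^sub>R (if Q j then x j else 0) = (1/2) *\<^sub>R (e j *\<^sub>R x j + flip e j *\<^sub>R x j)" if "j < k" for j
    proof -
      have "e j *\<^sub>R (if Q j then x j else 0) = ((e j + flip e j) / 2) *\<^sub>R x j"
        using that by (simp add: flip_def)
      then show ?thesis by (simp only: scaleR_add_left[symmetric] scaleR_scaleR) simp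
    qed
    then show ?thesis
      by (simp add: S_def scaleR_sum_right sum.distrib scaleR_add_right)
  qed
  have flip_mem: "flip e \<in> sign_vectors k" if "e \<in> sign_vectors k" for e
    using that by (auto simp: flip_def PiE_def Pi_def extensional_def)
  have flip_flip: "flip (flip e) = e" for e
    by (auto simp: flip_def)
  have flip_invariant: "(\<Sum>e\<in>sign_vectors k. norm (S (flip e))) = (\<Sum>e\<in>sign_vectors k. norm (S e))"
    by (rule sum.reindex_bij_witness[of _ flip flip]) (auto simp: flip_flip flip_mem)
  have "(\<Sum>e\<in>sign_vectors k. norm (\<Sum>j<k. e j *\<^sub>R (if Q j then x j else 0)))
      \<le> (\<Sum>e\<in>sign_vectors k. (1/2) * norm (S e) + (1/2) * norm (S (flip e)))"
    unfolding masked by (intro sum_mono) (simp add: norm_triangle_ineq distrib_left[symmetric])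
  also have "\<dots> = (\<Sum>e\<in>sign_vectors k. norm (S e))"
    by (simp add: sum.distrib sum_divide_distrib[symmetric] flip_invariant)
  finally show ?thesis
    unfolding rad_norm_def S_def by (simp add: divide_right_mono)
qed

lemma rad_norm_summable_family_le:
  assumes lin: "\<And>M. linear (E M)" and bound: "\<And>M v. norm (E M v) \<le> b M * norm v"
    and b: "summable b" "\<And>M. 0 \<le> b M"
  shows "rad_norm k (\<lambda>j. E (\<sigma> j) (x j)) \<le> (\<Sum>M. b M) * rad_norm k x"
proof -
  define S where "S = \<sigma> ` {..<k}"
  have "finite S" by (simp add: S_def)
  have split: "E (\<sigma> j) (x j) = (\<Sum>M\<in>S. E M (if \<sigma> j = M then x j else 0))" if "j < k" for j
  proof -
    have "(\<Sum>M\<in>S. E M (if \<sigma> j = M then x j else 0)) = (\<Sum>M\<in>S. if M = \<sigma> j then E (\<sigma> j) (x j) else 0)"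
      by (rule sum.cong) (auto simp: linear_0[OF lin])
    then show ?thesis using that by (simp add: S_def)
  qed
  have "rad_norm k (\<lambda>j. E (\<sigma> j) (x j)) = rad_norm k (\<lambda>j. \<Sum>M\<in>S. E M (if \<sigma> j = M then x j else 0))"
    by (rule rad_norm_cong) (rule split)
  also have "\<dots> \<le> (\<Sum>M\<in>S. rad_norm k (\<lambda>j. E M (if \<sigma> j = M then x j else 0)))"
    by (rule rad_norm_sum_le[OF \<open>finite S\<close>])
  also have "\<dots> \<le> (\<Sum>M\<in>S. b M * rad_norm k x)"
  proof (rule sum_mono)
    fix M
    have "rad_norm k (\<lambda>j. E M (if \<sigma> j = M then x j else 0)) \<le> b M * rad_norm k (\<lambda>j. if \<sigma> j = M then x j else 0)"
      by (rule rad_norm_linear_le[OF lin bound])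
    also have "\<dots> \<le> b M * rad_norm k x"
      by (rule mult_left_mono[OF rad_norm_mask_le b(2)])
    finally show "rad_norm k (\<lambda>j. E M (if \<sigma> j = M then x j else 0)) \<le> b M * rad_norm k x" .
  qed
  also have "\<dots> \<le> (\<Sum>M. b M) * rad_norm k x"
    unfolding sum_distrib_right[symmetric]
    by (intro mult_right_mono sum_le_suminf rad_norm_nonneg) (use b \<open>finite S\<close> in auto)
  finally show ?thesis .
qed

lemma R_bounded_subset: "R_bounded F \<Longrightarrow> G \<subseteq> F \<Longrightarrow> R_bounded G"
  unfolding R_bounded_def by blast

lemma R_bounded_complement_perturbation:
  assumes RF: "R_bounded F" and GF: "\<And>M. G M \<in> F"
    and lin: "\<And>M. linear (E M)" and bound: "\<And>M v. norm (E M v) \<le> b M * norm v"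
    and b: "summable b" "\<And>M. 0 \<le> b M"
  shows "R_bounded {(\<lambda>v. v - G M v + E M v) | M. True}"
proof -
  obtain K where K: "\<And>k T x. (\<forall>j<k. T j \<in> F) \<Longrightarrow> rad_norm k (\<lambda>j. T j (x j)) \<le> K * rad_norm k x"
    using RF unfolding R_bounded_def by blast
  show ?thesis
    unfolding R_bounded_def
  proof (intro exI allI impI)
    fix k :: nat and T x assume "\<forall>j<k. T j \<in> {(\<lambda>v. v - G M v + E M v) | M. True}"
    then have "\<forall>j. \<exists>M. j < k \<longrightarrow> T j = (\<lambda>v. v - G M v + E M v)" by blast
    then obtain \<sigma> where \<sigma>: "\<And>j. j < k \<Longrightarrow> T j = (\<lambda>v. v - G (\<sigma> j) v + E (\<sigma> j) v)"
      by (metis choice)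
    have "rad_norm k (\<lambda>j. T j (x j)) = rad_norm k (\<lambda>j. (x j - G (\<sigma> j) (x j)) + E (\<sigma> j) (x j))"
      by (rule rad_norm_cong) (simp add: \<sigma>)
    also have "\<dots> \<le> rad_norm k (\<lambda>j. x j - G (\<sigma> j) (x j)) + rad_norm k (\<lambda>j. E (\<sigma> j) (x j))"
      by (rule rad_norm_add_le)
    also have "\<dots> \<le> (rad_norm k x + rad_norm k (\<lambda>j. G (\<sigma> j) (x j))) + rad_norm k (\<lambda>j. E (\<sigma> j) (x j))"
      by (intro add_right_mono rad_norm_diff_le)
    also have "rad_norm k (\<lambda>j. G (\<sigma> j) (x j)) \<le> K * rad_norm k x"
      using K[of k "\<lambda>j. G (\<sigma> j)" x] GF by blast
    also have "rad_norm k (\<lambda>j. E (\<sigma> j) (x j)) \<le> (\<Sum>M. b M) * rad_norm k x"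
      by (rule rad_norm_summable_family_le[OF lin bound b])
    finally show "rad_norm k (\<lambda>j. T j (x j)) \<le> (1 + K + (\<Sum>M. b M)) * rad_norm k x"
      by (simp add: algebra_simps)
  qed
qed

lemma not_R_bounded_if_approximates_complements:
  assumes notR: "\<not> R_bounded {Ps N | N. N \<ge> 1}"
    and GF: "\<And>M. G M \<in> F" and Glin: "\<And>M. linear (G M)" and Pslin: "\<And>N. linear (Ps N)"
    and err: "\<And>M x. norm (Ps (Suc M) x - x + G M x) \<le> C * (1/2)^M * norm x"
  shows "\<not> R_bounded F"
proof
  assume "R_bounded F"
  define E where "E M v = Ps (Suc M) v - v + G M v" for M v
  have "R_bounded {(\<lambda>v. v - G M v + E M v) | M. True}"
  proof (rule R_bounded_complement_perturbation[where b="\<lambda>M. max C 0 * (1/2)^M"])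
    show "linear (E M)" for M
      unfolding E_def by (intro linear_compose_add linear_compose_sub Pslin Glin linear_ident)
    show "norm (E M v) \<le> max C 0 * (1/2)^M * norm v" for M v
      using err[of M v] unfolding E_def by (rule order_trans) (intro mult_right_mono; simp)
    show "summable (\<lambda>M. max C 0 * (1/2::real)^M)"
      by (simp add: summable_geometric)
  qed (use \<open>R_bounded F\<close> GF in auto)
  moreover have "{Ps N | N. N \<ge> 1} \<subseteq> {(\<lambda>v. v - G M v + E M v) | M. True}"
  proof -
    have "Ps N = (\<lambda>v. v - G (N - 1) v + E (N - 1) v)" if "N \<ge> 1" for N
      using that by (simp add: E_def)
    then show ?thesis by blast
  qed
  ultimately have "R_bounded {Ps N | N. N \<ge> 1}"
    by (rule R_bounded_subset)
  with notR show False ..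
qed

section \<open>Sequences of bounded variation\<close>

definition bounded_variation :: "(nat \<Rightarrow> real) \<Rightarrow> real \<Rightarrow> real \<Rightarrow> bool" where
  "bounded_variation m \<beta> V \<longleftrightarrow> (\<forall>n. \<bar>m n\<bar> \<le> \<beta>) \<and> (\<forall>N. (\<Sum>n<N. \<bar>m (Suc n) - m n\<bar>) \<le> V)"

lemma bounded_variation_mono:
  assumes "mono m" and "\<And>n. \<bar>m n\<bar> \<le> \<beta>"
  shows "bounded_variation m \<beta> (2 * \<beta>)"
proof -
  have "(\<Sum>n<N. \<bar>m (Suc n) - m n\<bar>) = (\<Sum>n<N. m (Suc n) - m n)" for N
    using assms(1) by (intro sum.cong) (auto simp: mono_def)
  then have "(\<Sum>n<N. \<bar>m (Suc n) - m n\<bar>) = m N - m 0" for N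
    by (simp add: sum_lessThan_telescope)
  moreover have "m N - m 0 \<le> 2 * \<beta>" for N
    using assms(2)[of 0] assms(2)[of N] by (simp add: abs_le_iff)
  ultimately show ?thesis using assms(2) by (simp add: bounded_variation_def)
qed

lemma bounded_variation_antimono:
  assumes "antimono m" and "\<And>n. \<bar>m n\<bar> \<le> \<beta>"
  shows "bounded_variation m \<beta> (2 * \<beta>)"
  using bounded_variation_mono[of "\<lambda>n. - m n" \<beta>] assms
  by (simp add: bounded_variation_def antimono_def mono_def abs_minus_commute)

lemma bounded_variation_diff:
  assumes "bounded_variation u \<beta>1 V1" and "bounded_variation v \<beta>2 V2"
  shows "bounded_variation (\<lambda>n. u n - v n) (\<beta>1 + \<beta>2) (V1 + V2)"
proof -
  have "(\<Sum>n<N. \<bar>(u (Suc n) - v (Suc n)) - (u n - v n)\<bar>)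
      \<le> (\<Sum>n<N. \<bar>u (Suc n) - u n\<bar>) + (\<Sum>n<N. \<bar>v (Suc n) - v n\<bar>)" for N
    unfolding sum.distrib[symmetric] by (rule sum_mono) linarith
  moreover have "\<bar>u n - v n\<bar> \<le> \<bar>u n\<bar> + \<bar>v n\<bar>" for n
    by linarith
  ultimately show ?thesis
    using assms unfolding bounded_variation_def by (meson add_mono order_trans)
qed

lemma bounded_variation_power:
  assumes "mono m \<or> antimono m" and "\<And>n. 0 \<le> m n" and "\<And>n. m n \<le> 1"
  shows "bounded_variation (\<lambda>n. m n ^ k) 1 2"
proof -
  have bounded: "\<bar>m n ^ k\<bar> \<le> 1" for n
    using assms(2,3) by (simp add: power_le_one)
  show ?thesis
  proof (cases "mono m")
    case True
    then have "mono (\<lambda>n. m n ^ k)"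
      using assms(2) by (auto simp: mono_def intro!: power_mono)
    then show ?thesis using bounded_variation_mono[OF _ bounded] by simp
  next
    case False
    then have "antimono (\<lambda>n. m n ^ k)"
      using assms(1,2) by (auto simp: antimono_def intro!: power_mono)
    then show ?thesis using bounded_variation_antimono[OF _ bounded] by simp
  qed
qed

definition ritt_symbol :: "nat \<Rightarrow> real \<Rightarrow> real" where
  "ritt_symbol k c = real k * c ^ k * (1 - c)"

lemma ritt_symbol_nonneg: "0 \<le> c \<Longrightarrow> c \<le> 1 \<Longrightarrow> 0 \<le> ritt_symbol k c"
  by (simp add: ritt_symbol_def)

lemma ritt_symbol_le_one:
  assumes "0 \<le> c" "c \<le> 1"
  shows "ritt_symbol k c \<le> 1"
proof -
  have "real k * c ^ k = (\<Sum>j<k. c ^ k)" by simp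
  also have "\<dots> \<le> (\<Sum>j<k. c ^ j)" by (intro sum_mono power_decreasing) (use assms in auto)
  finally have "ritt_symbol k c \<le> (1 - c) * (\<Sum>j<k. c ^ j)"
    unfolding ritt_symbol_def using assms by (simp add: mult.commute mult_left_mono)
  also have "\<dots> = 1 - c ^ k" by (simp add: one_diff_power_eq)
  also have "\<dots> \<le> 1" using assms by simp
  finally show ?thesis .
qed

lemma ritt_symbol_deriv:
  "(ritt_symbol k has_real_derivative (c ^ (k - 1) * real k * (real k - (real k + 1) * c))) (at c)"
proof -
  have deriv: "(ritt_symbol k has_real_derivative (real k * (real k * c ^ (k - 1) * (1 - c) - c ^ k))) (at c)"
    unfolding ritt_symbol_def[abs_def] by (auto intro!: derivative_eq_intros simp: algebra_simps)
  have "real k * (real k * c ^ (k - 1) * (1 - c) - c ^ k)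
      = c ^ (k - 1) * real k * (real k - (real k + 1) * c)"
    by (cases k) (simp_all add: algebra_simps)
  with deriv show ?thesis by (simp only:)
qed

lemma ritt_symbol_mono_below:
  assumes "0 \<le> x" "x \<le> y" "y \<le> real k / (real k + 1)"
  shows "ritt_symbol k x \<le> ritt_symbol k y"
proof (rule deriv_nonneg_imp_mono[OF ritt_symbol_deriv _ assms(2)])
  fix c assume c: "c \<in> {x..y}"
  have "(real k + 1) * y \<le> real k"
    using assms(3) by (simp add: field_simps)
  moreover have "(real k + 1) * c \<le> (real k + 1) * y"
    using c by (intro mult_left_mono) auto
  ultimately have "0 \<le> real k - (real k + 1) * c" by linarith
  then show "0 \<le> c ^ (k - 1) * real k * (real k - (real k + 1) * c)"
    using c assms(1) by (intro mult_nonneg_nonneg) auto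
qed

lemma ritt_symbol_antimono_above:
  assumes "real k / (real k + 1) \<le> x" "x \<le> y"
  shows "ritt_symbol k y \<le> ritt_symbol k x"
proof (rule deriv_nonpos_imp_antimono[OF ritt_symbol_deriv _ assms(2)])
  fix c assume c: "c \<in> {x..y}"
  have "0 \<le> real k / (real k + 1)" by simp
  then have "0 \<le> c" using assms(1) c by (simp only: atLeastAtMost_iff) linarith
  have "real k \<le> (real k + 1) * x"
    using assms(1) by (simp add: field_simps)
  moreover have "(real k + 1) * x \<le> (real k + 1) * c"
    using c by (intro mult_left_mono) auto
  ultimately have "real k - (real k + 1) * c \<le> 0" by linarith
  then show "c ^ (k - 1) * real k * (real k - (real k + 1) * c) \<le> 0"
    using \<open>0 \<le> c\<close> by (intro mult_nonneg_nonpos) auto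
qed

text \<open>A unimodal sequence with values in \<open>[0, 1]\<close>: it is the difference of two monotone
  bounded sequences, the truncation at the peak and the drop after it.\<close>
lemma bounded_variation_ritt_symbol:
  assumes mono: "mono c" and c01: "\<And>n. 0 \<le> c n" "\<And>n. c n \<le> 1"
  shows "bounded_variation (\<lambda>n. ritt_symbol k (c n)) 2 4"
proof -
  define peak where "peak = real k / (real k + 1)"
  have peak: "0 \<le> peak" "peak \<le> 1" by (auto simp: peak_def)
  define u where "u n = ritt_symbol k (min (c n) peak)" for n
  define v where "v n = u n - ritt_symbol k (c n)" for n
  have below: "c n \<le> peak \<Longrightarrow> v n = 0" and above: "\<not> c n \<le> peak \<Longrightarrow> v n = ritt_symbol k peak - ritt_symbol k (c n)" for n
    by (simp_all add: v_def u_def min_def)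
  have "mono u"
    unfolding mono_def u_def
  proof (intro allI impI ritt_symbol_mono_below)
    fix n n' :: nat assume "n \<le> n'"
    then show "min (c n) peak \<le> min (c n') peak" using mono by (simp add: mono_def min.coboundedI1)
  qed (use c01 peak in \<open>auto simp: peak_def\<close>)
  moreover have "\<bar>u n\<bar> \<le> 1" for n
    unfolding u_def using ritt_symbol_nonneg ritt_symbol_le_one c01[of n] peak
    by (simp add: min_def)
  moreover have "mono v"
    unfolding mono_def
  proof (intro allI impI)
    fix n n' :: nat assume "n \<le> n'"
    then have "c n \<le> c n'" using mono by (simp add: mono_def)
    then show "v n \<le> v n'"
      using ritt_symbol_antimono_above[of k, folded peak_def]
      by (cases "c n \<le> peak"; cases "c n' \<le> peak") (auto simp: below above)
  qed
  moreover have "\<bar>v n\<bar> \<le> 1" for n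
    using ritt_symbol_antimono_above[of k peak "c n", folded peak_def]
      ritt_symbol_nonneg[of "c n" k] ritt_symbol_le_one[OF peak, of k] c01[of n]
    by (cases "c n \<le> peak") (auto simp: below above)
  ultimately have "bounded_variation (\<lambda>n. u n - v n) (1 + 1) (2 * 1 + 2 * 1)"
    by (intro bounded_variation_diff bounded_variation_mono)
  then show ?thesis by (simp add: v_def)
qed

section \<open>Switching sequences\<close>

text \<open>For monotone \<open>g\<close> with values in \<open>[0, 1]\<close> this makes the multiplier by \<open>g\<close> close to
  \<open>I - P\<^sub>M\<^sub>+\<^sub>1\<close>.\<close>
definition switches_at :: "(nat \<Rightarrow> real) \<Rightarrow> nat \<Rightarrow> bool" where
  "switches_at g M \<longleftrightarrow> g M \<le> (1/4) ^ Suc M \<and> 1 - (1/4) ^ Suc M \<le> g (Suc M)"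

text \<open>The gaps between consecutive exponents leave
  room for a time \<open>switch_time M\<close> with \<open>switch_time M * decay M\<close> huge and
  \<open>switch_time M * decay (M + 1)\<close> tiny.\<close>
definition decay :: "nat \<Rightarrow> real" where
  "decay n = (1/4) ^ (2 * n * n)"

definition switch_time :: "nat \<Rightarrow> real" where
  "switch_time M = 4 ^ (2 * M * M + 3 * M + 1)"

lemma decay_pos: "0 < decay n" and decay_le_one: "decay n \<le> 1"
  by (auto simp: decay_def power_le_one)

lemma antimono_decay: "antimono decay"
  unfolding antimono_def decay_def by (auto intro!: power_decreasing mult_mono)

lemma switch_time_nonneg: "0 \<le> switch_time M"
  by (simp add: switch_time_def)

lemma switch_time_decay_Suc: "switch_time M * decay (Suc M) = (1/4) ^ Suc M"
proof -
  have e: "2 * Suc M * Suc M = (2 * M * M + 3 * M + 1) + Suc M" by simp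
  have "switch_time M * decay (Suc M)
      = (4 ^ (2 * M * M + 3 * M + 1) * (1/4) ^ (2 * M * M + 3 * M + 1)) * (1/4::real) ^ Suc M"
    unfolding switch_time_def decay_def e power_add by (simp only: mult_ac)
  also have "4 ^ (2 * M * M + 3 * M + 1) * (1/4::real) ^ (2 * M * M + 3 * M + 1) = 1"
    by (simp add: power_mult_distrib[symmetric])
  finally show ?thesis by simp
qed

lemma switch_time_decay: "switch_time M * decay M = 4 ^ (3 * M + 1)"
proof -
  have e: "2 * M * M + 3 * M + 1 = (3 * M + 1) + 2 * M * M" by simp
  have "switch_time M * decay M = 4 ^ (3 * M + 1) * (4 ^ (2 * M * M) * (1/4::real) ^ (2 * M * M))"
    unfolding switch_time_def decay_def e power_add by (simp only: mult_ac)
  also have "4 ^ (2 * M * M) * (1/4::real) ^ (2 * M * M) = 1"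
    by (simp add: power_mult_distrib[symmetric])
  finally show ?thesis by simp
qed

lemma exp_neg_switch_time_decay_le: "exp (- (switch_time M * decay M)) \<le> (1/4) ^ Suc M"
proof -
  define y :: real where "y = 4 ^ (3 * M + 1)"
  have "y > 0" by (simp add: y_def)
  have "y \<le> exp y" using exp_ge_add_one_self[of y] by linarith
  then have "exp (- y) \<le> 1 / y" using \<open>y > 0\<close> by (simp add: exp_minus field_simps)
  also have "1 / y \<le> 1 / 4 ^ Suc M" unfolding y_def by (intro divide_left_mono power_increasing) auto
  finally show ?thesis by (simp add: y_def switch_time_decay power_one_over)
qed

lemma switches_at_exp: "switches_at (\<lambda>n. exp (- (switch_time M * decay n))) M"
  unfolding switches_at_def switch_time_decay_Suc
  using exp_neg_switch_time_decay_le exp_ge_add_one_self[of "- ((1/4::real) ^ Suc M)"] by simp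

definition switch_steps :: "nat \<Rightarrow> nat" where
  "switch_steps M = 2 * 4 ^ (2 * M * M + 3 * M + 1)"

lemma real_switch_steps: "real (switch_steps M) = 2 * switch_time M"
  by (simp add: switch_steps_def switch_time_def)

lemma switches_at_power: "switches_at (\<lambda>n. (1 - decay n / 2) ^ switch_steps M) M"
proof -
  have "(1 - decay M / 2) ^ switch_steps M \<le> exp (- (decay M / 2)) ^ switch_steps M"
    using decay_le_one[of M] exp_ge_add_one_self[of "- (decay M / 2)"] by (intro power_mono) auto
  also have "\<dots> = exp (- (switch_time M * decay M))"
    by (simp add: exp_of_nat_mult[symmetric] real_switch_steps)
  also have "\<dots> \<le> (1/4) ^ Suc M" by (rule exp_neg_switch_time_decay_le)
  finally have "(1 - decay M / 2) ^ switch_steps M \<le> (1/4) ^ Suc M" .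
  moreover have "1 + real (switch_steps M) * (- (decay (Suc M) / 2))
      \<le> (1 + - (decay (Suc M) / 2)) ^ switch_steps M"
    by (rule Bernoulli_inequality) (use decay_le_one[of "Suc M"] in simp)
  ultimately show ?thesis
    unfolding switches_at_def using switch_time_decay_Suc[of M]
    by (simp add: real_switch_steps algebra_simps)
qed

lemma quarter_power_bounds:
  "(1/4::real) ^ Suc M \<le> (1/2) ^ M" "(1/4::real) ^ Suc M * real (Suc M) \<le> (1/2) ^ M"
proof -
  have quarter: "(1/4::real) ^ Suc M = (1/2) ^ M * (1/2) ^ (M + 2)"
  proof -
    have "(1/4::real) = (1/2)^2" by (simp add: power2_eq_square)
    then have "(1/4::real) ^ Suc M = (1/2) ^ (2 * Suc M)" by (simp only: power_mult)
    also have "2 * Suc M = M + (M + 2)" by simp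
    finally show ?thesis by (simp only: power_add)
  qed
  show "(1/4::real) ^ Suc M \<le> (1/2) ^ M"
    unfolding quarter by (rule mult_left_le[OF power_le_one]) simp_all
  have "Suc M \<le> 2 ^ Suc M" using less_exp[of "Suc M"] by simp
  then have "real (Suc M) \<le> real (2 ^ Suc M)" by (simp only: of_nat_le_iff)
  then have "real (Suc M) \<le> 2 ^ Suc M" by simp
  also have "\<dots> \<le> 2 ^ (M + 2)" by (intro power_increasing) auto
  finally have "(1/2::real) ^ (M + 2) * real (Suc M) \<le> 1"
    by (simp add: field_simps)
  then show "(1/4::real) ^ Suc M * real (Suc M) \<le> (1/2) ^ M"
    unfolding quarter using mult_left_mono[of _ 1 "(1/2::real)^M"] by (simp add: mult.assoc)
qed

section \<open>Schauder decompositions and their multipliers\<close>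

locale schauder_dec =
  fixes J :: "'a::banach \<Rightarrow> 'a" and Xs :: "nat \<Rightarrow> 'a set"
  assumes decomposition: "schauder_decomposition J Xs"
begin

abbreviation p where "p \<equiv> sd_coord Xs"
abbreviation P where "P \<equiv> sd_partial Xs"

lemma subspace_component: "subspace (Xs n)" and closed_component: "closed (Xs n)"
  using decomposition by (auto simp: schauder_decomposition_def closed_csubspace_def)

lemma expansion_ex1: "\<exists>!u. (\<forall>n. u n \<in> Xs n) \<and> (\<lambda>N. \<Sum>n<N. u n) \<longlonglongrightarrow> x"
  using decomposition by (auto simp: schauder_decomposition_def)

lemma coords_eq_The: "(\<lambda>n. p n x) = (THE u. (\<forall>n. u n \<in> Xs n) \<and> (\<lambda>N. \<Sum>n<N. u n) \<longlonglongrightarrow> x)"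
  by (auto simp: sd_coord_def)

lemma coord_mem: "p n x \<in> Xs n"
  and coord_expansion: "(\<lambda>N. \<Sum>n<N. p n x) \<longlonglongrightarrow> x"
  using theI'[OF expansion_ex1[of x]] unfolding coords_eq_The[symmetric] by auto

lemma partial_def': "P N x = (\<Sum>n<N. p n x)"
  by (simp add: sd_partial_def)

lemma partial_tendsto: "(\<lambda>N. P N x) \<longlonglongrightarrow> x"
  using coord_expansion by (simp add: partial_def')

lemma coord_unique:
  assumes "\<And>n. u n \<in> Xs n" and "(\<lambda>N. \<Sum>n<N. u n) \<longlonglongrightarrow> x"
  shows "p n x = u n"
proof -
  have "(THE u. (\<forall>n. u n \<in> Xs n) \<and> (\<lambda>N. \<Sum>n<N. u n) \<longlonglongrightarrow> x) = u"
    by (rule the1_equality[OF expansion_ex1]) (use assms in auto)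
  then show ?thesis unfolding coords_eq_The[symmetric] by metis
qed

lemma coord_eq_partial_diff: "p n x = P (Suc n) x - P n x"
  by (simp add: partial_def')

lemma linear_coord: "linear (p n)"
proof
  show "p n (x + y) = p n x + p n y" for x y
    by (rule coord_unique)
       (auto intro: subspace_add[OF subspace_component] coord_mem tendsto_add coord_expansion
             simp: sum.distrib)
  show "p n (c *\<^sub>R x) = c *\<^sub>R p n x" for c x
    by (rule coord_unique)
       (auto intro: subspace_scale[OF subspace_component] coord_mem tendsto_scaleR coord_expansion
             simp: scaleR_sum_right[symmetric])
qed

lemma linear_partial: "linear (P N)"
  unfolding partial_def' by (intro linear_compose_sum) (simp add: linear_coord)

lemma coord_of_mem: "v \<in> Xs j \<Longrightarrow> p n v = (if n = j then v else 0)"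
proof (rule coord_unique)
  show "(if m = j then v else 0) \<in> Xs m" if "v \<in> Xs j" for m
    using that subspace_0[OF subspace_component] by auto
  have "eventually (\<lambda>N. (\<Sum>m<N. (if m = j then v else 0)) = v) sequentially"
    using eventually_ge_at_top[of "Suc j"] by eventually_elim auto
  then show "(\<lambda>N. \<Sum>m<N. (if m = j then v else 0)) \<longlonglongrightarrow> v"
    by (rule tendsto_eventually)
qed

lemma coord_sum_coords:
  assumes "finite S"
  shows "p j (\<Sum>n\<in>S. f n *\<^sub>R p n x) = (if j \<in> S then f j *\<^sub>R p j x else 0)"
proof -
  have "p j (\<Sum>n\<in>S. f n *\<^sub>R p n x) = (\<Sum>n\<in>S. if n = j then f j *\<^sub>R p j x else 0)"
    by (auto simp: linear_sum[OF linear_coord] linear_scale[OF linear_coord] coord_of_mem[OF coord_mem]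
        intro!: sum.cong)
  then show ?thesis using assms by (simp add: sum.delta')
qed

lemma coord_partial: "p n (P N x) = (if n < N then p n x else 0)"
  using coord_sum_coords[of "{..<N}" n "\<lambda>_. 1" x] by (simp add: partial_def')

lemma coord_ext:
  assumes "\<And>n. p n x = p n y"
  shows "x = y"
proof (rule LIMSEQ_unique)
  show "(\<lambda>N. \<Sum>n<N. p n x) \<longlonglongrightarrow> x" by (rule coord_expansion)
  show "(\<lambda>N. \<Sum>n<N. p n x) \<longlonglongrightarrow> y" using coord_expansion[of y] by (simp add: assms)
qed

text \<open>The projections are not assumed to be continuous, so \<open>P\<^sub>N\<close> cannot simply be pulled
  through a series; instead the series is reassembled coordinatewise, using that the
  components are closed and the expansion is unique.\<close>
lemma partial_suminf:
  assumes y: "x sums y" and bound: "\<And>N i. norm (P N (x i)) \<le> b i" and b: "summable b"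
  shows "P N y = (\<Sum>i. P N (x i))"
proof -
  have coord_bound: "norm (p n (x i)) \<le> 2 * b i" for n i
    using norm_triangle_ineq4[of "P (Suc n) (x i)" "P n (x i)"] bound[of "Suc n" i] bound[of n i]
    by (simp add: coord_eq_partial_diff)
  have summable_coord: "summable (\<lambda>i. p n (x i))" for n
    by (rule summable_comparison_test[where g="\<lambda>i. 2 * b i"]) (use coord_bound b in auto)
  have summable_partial: "summable (\<lambda>i. P N (x i))" for N
    unfolding partial_def' by (rule summable_sum) (use summable_coord in auto)
  define w where "w n = (\<Sum>i. p n (x i))" for n
  have w_mem: "w n \<in> Xs n" for n
  proof -
    have "(\<lambda>j. \<Sum>i<j. p n (x i)) \<longlonglongrightarrow> w n"
      unfolding w_def using summable_coord summable_LIMSEQ by blast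
    moreover have "(\<Sum>i<j. p n (x i)) \<in> Xs n" for j
      by (auto intro: subspace_sum[OF subspace_component] coord_mem)
    ultimately show ?thesis
      using closed_sequentially[OF closed_component, of "\<lambda>j. \<Sum>i<j. p n (x i)"] by blast
  qed
  have w_partial: "(\<Sum>n<N. w n) = (\<Sum>i. P N (x i))" for N
    unfolding w_def partial_def' by (rule suminf_sum[symmetric]) (use summable_coord in auto)
  have "(\<lambda>N. \<Sum>i. P N (x i)) \<longlonglongrightarrow> y"
  proof (rule LIMSEQ_I)
    fix e :: real assume "e > 0"
    have "summable x" using y by (simp add: sums_iff)
    obtain j1 where j1: "\<And>j. j \<ge> j1 \<Longrightarrow> norm (\<Sum>i. b (i + j)) < e / 3"
      using suminf_exist_split[OF _ b, of "e / 3"] \<open>e > 0\<close> by auto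
    obtain j2 where j2: "\<And>j. j \<ge> j2 \<Longrightarrow> norm (\<Sum>i. x (i + j)) < e / 3"
      using suminf_exist_split[OF _ \<open>summable x\<close>, of "e / 3"] \<open>e > 0\<close> by auto
    define j where "j = max j1 j2"
    have tail_b: "norm (\<Sum>i. b (i + j)) < e / 3" and tail_x: "norm (\<Sum>i. x (i + j)) < e / 3"
      using j1 j2 by (simp_all add: j_def)
    obtain M where M: "\<And>N. N \<ge> M \<Longrightarrow> norm (P N (\<Sum>i<j. x i) - (\<Sum>i<j. x i)) < e / 3"
      using LIMSEQ_D[OF LIM_zero[OF partial_tendsto[of "\<Sum>i<j. x i"]], of "e / 3"] \<open>e > 0\<close> by auto
    show "\<exists>M. \<forall>N\<ge>M. norm ((\<Sum>i. P N (x i)) - y) < e"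
    proof (intro exI allI impI)
      fix N assume "N \<ge> M"
      define A where "A = P N (\<Sum>i<j. x i) - (\<Sum>i<j. x i)"
      define B where "B = (\<Sum>i. P N (x (i + j)))"
      define C where "C = (\<Sum>i. x (i + j))"
      have "(\<Sum>i. P N (x i)) - y = A + B - C"
        using suminf_split_initial_segment[OF summable_partial, of N j]
          suminf_split_initial_segment[OF \<open>summable x\<close>, of j] sums_unique[OF y]
        by (simp add: A_def B_def C_def linear_sum[OF linear_partial])
      then have "norm ((\<Sum>i. P N (x i)) - y) \<le> norm A + norm B + norm C"
        using norm_triangle_ineq4[of "A + B" C] norm_triangle_ineq[of A B] by simp
      moreover have "norm B \<le> norm (\<Sum>i. b (i + j))"
        using norm_suminf_le[of "\<lambda>i. P N (x (i + j))" "\<lambda>i. b (i + j)"]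
          bound summable_ignore_initial_segment[OF b] by (simp add: B_def)
      ultimately show "norm ((\<Sum>i. P N (x i)) - y) < e"
        using M[OF \<open>N \<ge> M\<close>] tail_b tail_x by (simp add: A_def C_def)
    qed
  qed
  then have "p n y = w n" for n
    by (intro coord_unique w_mem) (simp add: w_partial)
  then show ?thesis by (simp add: partial_def' w_partial)
qed

definition partials_le :: "real \<Rightarrow> 'a set" where
  "partials_le c = {x. \<forall>N. norm (P N x) \<le> c}"

lemma partials_le_scaleR:
  assumes "x \<in> partials_le c" shows "r *\<^sub>R x \<in> partials_le (\<bar>r\<bar> * c)"
  using assms by (auto simp: partials_le_def linear_scale[OF linear_partial] mult_left_mono)

lemma partials_le_midpoint:
  assumes "y1 \<in> partials_le c" "y2 \<in> partials_le c"
  shows "(1/2) *\<^sub>R (y1 - y2) \<in> partials_le c"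
proof -
  have "norm (P N ((1/2) *\<^sub>R (y1 - y2))) \<le> c" for N
  proof -
    have "norm (P N y1) \<le> c" "norm (P N y2) \<le> c"
      using assms by (simp_all add: partials_le_def)
    then show ?thesis
      using norm_triangle_ineq4[of "P N y1" "P N y2"]
      by (simp add: linear_diff[OF linear_partial] linear_scale[OF linear_partial])
  qed
  then show ?thesis by (simp add: partials_le_def)
qed

lemma ball_in_closure_partials_le_centered:
  assumes "ball z r \<subseteq> closure (partials_le c)"
  shows "ball 0 r \<subseteq> closure (partials_le c)"
proof (clarsimp simp: closure_approachable)
  fix w :: 'a and e :: real assume "norm w < r" "e > 0"
  then have "z + w \<in> closure (partials_le c)" "z - w \<in> closure (partials_le c)"
    using assms by (auto simp: dist_norm subset_iff)
  then obtain y1 y2 where y: "y1 \<in> partials_le c" "y2 \<in> partials_le c"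
    and close: "norm (y1 - (z + w)) < e" "norm (y2 - (z - w)) < e"
    using \<open>e > 0\<close> by (metis closure_approachable dist_norm)
  define a where "a = y1 - (z + w)"
  define b where "b = y2 - (z - w)"
  have "(1/2) *\<^sub>R (y1 - y2) - w = (1/2) *\<^sub>R (a - b)"
    by (simp add: a_def b_def algebra_simps flip: scaleR_2)
  then have "norm ((1/2) *\<^sub>R (y1 - y2) - w) \<le> (1/2) * (norm a + norm b)"
    using norm_triangle_ineq4[of a b] by simp
  also have "\<dots> < e" using close by (simp add: a_def b_def)
  finally show "\<exists>y\<in>partials_le c. dist y w < e"
    using partials_le_midpoint[OF y] by (auto simp: dist_norm)
qed

text \<open>Successive approximation: the residual after \<open>j\<close> steps lies in the ball of radius
  \<open>r/2\<^sup>j\<close>, so the \<open>j\<close>-th correction can be taken in \<open>partials_le (c/2\<^sup>j)\<close>.\<close>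
lemma ball_subset_partials_le:
  assumes r: "r > 0" and ball: "ball 0 r \<subseteq> closure (partials_le c)" and y: "norm y < r"
  shows "y \<in> partials_le (2 * c)"
proof -
  have step: "\<exists>x. x \<in> partials_le (c * (1/2)^j) \<and> norm (w - x) < r * (1/2)^(Suc j)"
    if "norm w < r * (1/2)^j" for j w
  proof -
    have "2^j *\<^sub>R w \<in> closure (partials_le c)"
      using ball that by (auto simp: subset_iff field_simps power_one_over)
    then obtain x' where x': "x' \<in> partials_le c" "norm (2^j *\<^sub>R w - x') < r / 2"
      using r by (metis closure_approachable dist_commute dist_norm half_gt_zero)
    have "w - (1/2)^j *\<^sub>R x' = (1/2)^j *\<^sub>R (2^j *\<^sub>R w - x')"
      by (simp add: scaleR_diff_right power_one_over)
    moreover have "(1/2::real)^j * norm (2^j *\<^sub>R w - x') < (1/2)^j * (r / 2)"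
      using x'(2) by (intro mult_strict_left_mono) simp_all
    ultimately have "norm (w - (1/2)^j *\<^sub>R x') < r * (1/2)^(Suc j)"
      by (simp add: mult_ac)
    then show ?thesis
      using partials_le_scaleR[OF x'(1), of "(1/2)^j"] by (auto simp: mult.commute)
  qed
  define pick where "pick j w = (SOME x. x \<in> partials_le (c * (1/2)^j) \<and> norm (w - x) < r * (1/2)^(Suc j))" for j w
  define res where "res = rec_nat y (\<lambda>j w. w - pick j w)"
  define x where "x j = pick j (res j)" for j
  have res_bound: "norm (res j) < r * (1/2)^j" for j
    by (induction j) (use y someI_ex[OF step] in \<open>auto simp: res_def pick_def\<close>)
  have x_le: "x j \<in> partials_le (c * (1/2)^j)" for j
    using someI_ex[OF step[OF res_bound]] by (simp add: x_def pick_def)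
  have "(\<Sum>i<j. x i) = y - res j" for j
    by (induction j) (simp_all add: res_def x_def)
  moreover have "res \<longlonglongrightarrow> 0"
  proof (rule tendsto_0_le[where K=1])
    show "(\<lambda>j. r * (1/2::real)^j) \<longlonglongrightarrow> 0"
      by (intro tendsto_mult_right_zero LIMSEQ_power_zero) simp
    show "\<forall>\<^sub>F j in sequentially. norm (res j) \<le> norm (r * (1/2::real)^j) * 1"
      using res_bound r by (intro always_eventually allI) (simp add: less_imp_le)
  qed
  ultimately have "x sums y"
    unfolding sums_def using tendsto_diff[OF tendsto_const[of y] \<open>res \<longlonglongrightarrow> 0\<close>] by simp
  have bound: "norm (P N (x i)) \<le> c * (1/2)^i" for N i
    using x_le by (simp add: partials_le_def)
  have geometric: "summable (\<lambda>i. c * (1/2::real)^i)" "(\<Sum>i. c * (1/2::real)^i) = 2 * c"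
    by (simp_all add: summable_geometric suminf_geometric[of "1/2::real"] suminf_mult)
  have "norm (P N y) \<le> 2 * c" for N
    unfolding partial_suminf[OF \<open>x sums y\<close> bound geometric(1)] geometric(2)[symmetric]
    by (rule norm_suminf_le) (use bound geometric in auto)
  then show ?thesis by (simp add: partials_le_def)
qed

text \<open>The sets \<open>partials_le k\<close> cover \<open>X\<close>, so by Baire's theorem one of their closures
  contains a ball.\<close>
lemma partials_uniformly_bounded: "\<exists>K>0. \<forall>N x. norm (P N x) \<le> K * norm x"
proof -
  have cover: "(\<Union>k::nat. closure (partials_le (real k))) = UNIV"
  proof -
    have "\<exists>k::nat. x \<in> partials_le (real k)" for x
    proof -
      obtain K where "\<And>N. norm (P N x) \<le> K"
        using convergent_imp_Bseq[OF convergentI[OF partial_tendsto]] by (auto simp: Bseq_def)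
      moreover obtain k :: nat where "K \<le> real k" using real_arch_simple by blast
      ultimately show ?thesis by (auto simp: partials_le_def intro: order_trans)
    qed
    then show ?thesis using closure_subset by blast
  qed
  have "\<exists>k::nat. interior (closure (partials_le (real k))) \<noteq> {}"
  proof (rule ccontr)
    assume "\<not> ?thesis"
    then have "Met_TC.mtopology interior_of (\<Union>k::nat. closure (partials_le (real k))) = {}"
      by (intro Met_TC.metric_Baire_category_alt) (auto simp: complete_UNIV euclidean_interior_of)
    then show False using cover by (simp add: euclidean_interior_of)
  qed
  then obtain k :: nat where "interior (closure (partials_le (real k))) \<noteq> {}" by blast
  then obtain z r where r: "r > 0" and zr: "ball z r \<subseteq> closure (partials_le (real k))"
    by (metis ex_in_conv interior_subset open_contains_ball open_interior subset_trans)
  have small: "norm (P N y) \<le> 2 * real k" if "norm y < r" for y N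
    using ball_subset_partials_le[OF r ball_in_closure_partials_le_centered[OF zr] that]
    by (simp add: partials_le_def)
  show ?thesis
  proof (intro exI[of _ "4 * real k / r + 1"] conjI allI)
    show "4 * real k / r + 1 > 0" using r by (simp add: add_nonneg_pos)
    fix N x
    show "norm (P N x) \<le> (4 * real k / r + 1) * norm x"
    proof (cases "x = 0")
      case True then show ?thesis by (simp add: linear_0[OF linear_partial])
    next
      case False
      define t where "t = r / (2 * norm x)"
      have t: "t > 0" "norm (t *\<^sub>R x) < r" using r False by (simp_all add: t_def)
      then have "t * norm (P N x) \<le> 2 * real k"
        using small[of "t *\<^sub>R x" N] by (simp add: linear_scale[OF linear_partial])
      then have "norm (P N x) \<le> 4 * real k / r * norm x"
        using t r False by (simp add: t_def field_simps)
      then show ?thesis by (simp add: distrib_right add_increasing2)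
    qed
  qed
qed

definition partial_bound where
  "partial_bound = (SOME K. K > 0 \<and> (\<forall>N x. norm (P N x) \<le> K * norm x))"

lemma partial_bound_pos: "partial_bound > 0"
  and norm_partial_le: "norm (P N x) \<le> partial_bound * norm x"
  using someI_ex[OF partials_uniformly_bounded] unfolding partial_bound_def[symmetric] by auto

lemma norm_coord_le: "norm (p n x) \<le> 2 * partial_bound * norm x"
  using norm_triangle_ineq4[of "P (Suc n) x" "P n x"] norm_partial_le[of "Suc n" x] norm_partial_le[of n x]
  by (simp add: coord_eq_partial_diff)

lemma bounded_linear_coord: "bounded_linear (p n)"
  by (rule bounded_linear_intro[where K="2 * partial_bound"])
     (use norm_coord_le in \<open>simp_all add: linear_add[OF linear_coord] linear_scale[OF linear_coord] mult_ac\<close>)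

definition multiplier :: "(nat \<Rightarrow> real) \<Rightarrow> 'a \<Rightarrow> 'a" where
  "multiplier m x = lim (\<lambda>N. \<Sum>n<N. m n *\<^sub>R p n x)"

text \<open>Abel summation rewrites the partial sums of \<open>\<Sum> m\<^sub>n p\<^sub>n x\<close> in terms of \<open>P\<^sub>N x - x\<close>,
  which are uniformly bounded and tend to \<open>0\<close>.\<close>
lemma multiplier_tendsto:
  assumes "bounded_variation m \<beta> V"
  shows "(\<lambda>N. \<Sum>n<N. m n *\<^sub>R p n x) \<longlonglongrightarrow> multiplier m x"
    and "norm (multiplier m x) \<le> (\<beta> * (partial_bound + 2) + V * (partial_bound + 1)) * norm x"
proof -
  define K where "K = partial_bound"
  have m_le: "\<bar>m n\<bar> \<le> \<beta>" and var_le: "(\<Sum>n<N. \<bar>m (Suc n) - m n\<bar>) \<le> V" for n N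
    using assms by (auto simp: bounded_variation_def)
  define Q where "Q n = P n x - x" for n
  have Q_le: "norm (Q n) \<le> (K + 1) * norm x" for n
    unfolding Q_def K_def using norm_triangle_ineq4[of "P n x" x] norm_partial_le[of n x]
    by (simp add: distrib_right)
  have "Q \<longlonglongrightarrow> 0" unfolding Q_def using partial_tendsto[of x] by (simp add: LIM_zero)
  define d where "d n = m (Suc n) - m n" for n
  have abel: "(\<Sum>n<N. m n *\<^sub>R p n x) = m N *\<^sub>R Q N - m 0 *\<^sub>R Q 0 - (\<Sum>n<N. d n *\<^sub>R Q (Suc n))" for N
  proof -
    have "m n *\<^sub>R p n x = (m (Suc n) *\<^sub>R Q (Suc n) - m n *\<^sub>R Q n) - d n *\<^sub>R Q (Suc n)" for n
      by (simp add: Q_def d_def coord_eq_partial_diff algebra_simps)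
    then have "(\<Sum>n<N. m n *\<^sub>R p n x)
        = (\<Sum>n<N. m (Suc n) *\<^sub>R Q (Suc n) - m n *\<^sub>R Q n) - (\<Sum>n<N. d n *\<^sub>R Q (Suc n))"
      by (simp only: sum_subtractf)
    also have "(\<Sum>n<N. m (Suc n) *\<^sub>R Q (Suc n) - m n *\<^sub>R Q n) = m N *\<^sub>R Q N - m 0 *\<^sub>R Q 0"
      by (rule sum_lessThan_telescope)
    finally show ?thesis .
  qed
  have "summable (\<lambda>n. \<bar>d n\<bar>)"
    by (rule summableI_nonneg_bounded[where x=V]) (use var_le in \<open>auto simp: d_def\<close>)
  then have "summable (\<lambda>n. d n *\<^sub>R Q (Suc n))"
    by (rule summable_comparison_test'[where g="\<lambda>n. \<bar>d n\<bar> * ((K + 1) * norm x)", OF summable_mult2])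
       (use Q_le in \<open>auto intro: mult_left_mono\<close>)
  moreover have "(\<lambda>N. m N *\<^sub>R Q N) \<longlonglongrightarrow> 0"
    by (rule tendsto_0_le[OF \<open>Q \<longlonglongrightarrow> 0\<close>, where K=\<beta>])
       (use m_le in \<open>auto intro!: always_eventually simp: mult.commute mult_right_mono\<close>)
  ultimately have "(\<lambda>N. \<Sum>n<N. m n *\<^sub>R p n x) \<longlonglongrightarrow> 0 - m 0 *\<^sub>R Q 0 - (\<Sum>n. d n *\<^sub>R Q (Suc n))"
    unfolding abel by (intro tendsto_diff tendsto_const summable_LIMSEQ)
  then show conv: "(\<lambda>N. \<Sum>n<N. m n *\<^sub>R p n x) \<longlonglongrightarrow> multiplier m x"
    unfolding multiplier_def by (metis limI)
  have "norm (\<Sum>n<N. m n *\<^sub>R p n x) \<le> (\<beta> * (K + 2) + V * (K + 1)) * norm x" for N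
  proof -
    have "norm (\<Sum>n<N. d n *\<^sub>R Q (Suc n)) \<le> (\<Sum>n<N. \<bar>d n\<bar>) * ((K + 1) * norm x)"
      unfolding sum_distrib_right
      by (rule order_trans[OF norm_sum]) (use Q_le in \<open>auto intro!: sum_mono mult_left_mono\<close>)
    also have "\<dots> \<le> V * ((K + 1) * norm x)"
      using var_le[of N] partial_bound_pos by (intro mult_right_mono) (auto simp: d_def K_def)
    finally have "norm (\<Sum>n<N. d n *\<^sub>R Q (Suc n)) \<le> V * ((K + 1) * norm x)" .
    moreover have "norm (m N *\<^sub>R Q N) \<le> \<beta> * ((K + 1) * norm x)"
      using m_le Q_le by (simp add: mult_mono')
    moreover have "norm (m 0 *\<^sub>R Q 0) \<le> \<beta> * norm x"
      using m_le by (simp add: Q_def partial_def' mult_right_mono)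
    moreover have "norm (a - b - c) \<le> norm a + norm b + norm c" for a b c :: 'a
      using norm_triangle_ineq4[of "a - b" c] norm_triangle_ineq4[of a b] by simp
    ultimately have "norm (\<Sum>n<N. m n *\<^sub>R p n x)
        \<le> \<beta> * ((K + 1) * norm x) + \<beta> * norm x + V * ((K + 1) * norm x)"
      unfolding abel by (meson add_mono order_trans)
    then show ?thesis by (simp add: algebra_simps)
  qed
  then show "norm (multiplier m x) \<le> (\<beta> * (partial_bound + 2) + V * (partial_bound + 1)) * norm x"
    unfolding K_def by (intro LIMSEQ_le_const2[OF tendsto_norm[OF conv]]) auto
qed

lemma bounded_linear_multiplier:
  assumes "bounded_variation m \<beta> V"
  shows "bounded_linear (multiplier m)"
proof (rule bounded_linear_intro[where K="\<beta> * (partial_bound + 2) + V * (partial_bound + 1)"])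
  note conv = multiplier_tendsto[OF assms]
  show "multiplier m (x + y) = multiplier m x + multiplier m y" for x y
    using tendsto_add[OF conv(1)[of x] conv(1)[of y]] conv(1)[of "x + y"]
    by (simp add: linear_add[OF linear_coord] scaleR_add_right sum.distrib LIMSEQ_unique)
  show "multiplier m (r *\<^sub>R x) = r *\<^sub>R multiplier m x" for r x
    using tendsto_scaleR[OF tendsto_const[of r] conv(1)[of x]] conv(1)[of "r *\<^sub>R x"]
    by (simp add: linear_scale[OF linear_coord] scaleR_sum_right LIMSEQ_unique mult.commute)
  show "norm (multiplier m x) \<le> norm x * (\<beta> * (partial_bound + 2) + V * (partial_bound + 1))" for x
    using conv(2)[of x] by (simp add: mult.commute)
qed

lemma coord_multiplier:
  assumes "bounded_variation m \<beta> V"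
  shows "p j (multiplier m x) = m j *\<^sub>R p j x"
proof (rule LIMSEQ_unique)
  show "(\<lambda>N. p j (\<Sum>n<N. m n *\<^sub>R p n x)) \<longlonglongrightarrow> p j (multiplier m x)"
    by (rule bounded_linear.tendsto[OF bounded_linear_coord multiplier_tendsto(1)[OF assms]])
  have "eventually (\<lambda>N. p j (\<Sum>n<N. m n *\<^sub>R p n x) = m j *\<^sub>R p j x) sequentially"
    using eventually_ge_at_top[of "Suc j"] by eventually_elim (simp add: coord_sum_coords)
  then show "(\<lambda>N. p j (\<Sum>n<N. m n *\<^sub>R p n x)) \<longlonglongrightarrow> m j *\<^sub>R p j x"
    by (rule tendsto_eventually)
qed

lemma multiplier_power:
  assumes "\<And>k. bounded_variation (\<lambda>n. m n ^ k) \<beta> V"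
  shows "(multiplier m ^^ k) x = multiplier (\<lambda>n. m n ^ k) x"
proof (induction k arbitrary: x)
  case 0
  show ?case by (rule coord_ext) (simp add: coord_multiplier[OF assms[of 0], simplified])
next
  case (Suc k)
  have "bounded_variation m \<beta> V" using assms[of 1] by simp
  show ?case
  proof (rule coord_ext)
    fix j
    have "p j ((multiplier m ^^ Suc k) x) = m j *\<^sub>R (m j ^ k *\<^sub>R p j x)"
      by (simp add: Suc coord_multiplier[OF assms] coord_multiplier[OF \<open>bounded_variation m \<beta> V\<close>])
    also have "\<dots> = p j (multiplier (\<lambda>n. m n ^ Suc k) x)"
      unfolding coord_multiplier[OF assms] by simp
    finally show "p j ((multiplier m ^^ Suc k) x) = p j (multiplier (\<lambda>n. m n ^ Suc k) x)" .
  qed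
qed

text \<open>On the first \<open>M + 1\<close> coordinates \<open>P\<^sub>M\<^sub>+\<^sub>1 - I + multiplier g\<close> acts by \<open>g\<close>, on the
  remaining ones by \<open>g - 1\<close>; both are bounded by \<open>\<eta>\<close> in modulus.\<close>
lemma norm_complement_multiplier_le:
  assumes g: "mono g" "\<And>n. 0 \<le> g n" "\<And>n. g n \<le> 1"
    and switch: "g M \<le> \<eta>" "1 - \<eta> \<le> g (Suc M)"
  shows "norm (P (Suc M) x - x + multiplier g x)
    \<le> \<eta> * (real (Suc M) * (2 * partial_bound) + (3 * partial_bound + 4) * (partial_bound + 1)) * norm x"
proof -
  define K where "K = partial_bound"
  have "\<eta> \<ge> 0" using g(2)[of M] switch(1) by simp
  have bv_g: "bounded_variation g 1 2"
    using bounded_variation_mono[OF g(1), of 1] g(2,3) by (simp add: abs_le_iff)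
  define D where "D n = g (max n (Suc M)) - 1" for n
  have "mono D" using g(1) by (auto simp: D_def mono_def)
  moreover have "\<bar>D n\<bar> \<le> \<eta>" for n
    using switch(2) g(3)[of "max n (Suc M)"] monoD[OF g(1), of "Suc M" "max n (Suc M)"]
    by (simp add: D_def abs_le_iff)
  ultimately have bv_D: "bounded_variation D \<eta> (2 * \<eta>)" by (rule bounded_variation_mono)
  define H where "H = (\<Sum>n<Suc M. g n *\<^sub>R p n x)"
  have split: "P (Suc M) x - x + multiplier g x = H + multiplier D (x - P (Suc M) x)"
  proof (rule coord_ext)
    fix j
    have l: "p j (P (Suc M) x - x + multiplier g x) = (if j < Suc M then p j x else 0) - p j x + g j *\<^sub>R p j x"
      by (simp add: linear_add[OF linear_coord] linear_diff[OF linear_coord] coord_partial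
          coord_multiplier[OF bv_g])
    have r: "p j (H + multiplier D (x - P (Suc M) x))
        = (if j < Suc M then g j *\<^sub>R p j x else 0) + D j *\<^sub>R (p j x - (if j < Suc M then p j x else 0))"
      unfolding H_def
      by (simp only: linear_add[OF linear_coord] coord_sum_coords[OF finite_lessThan] lessThan_iff)
         (simp add: coord_partial coord_multiplier[OF bv_D] linear_diff[OF linear_coord])
    show "p j (P (Suc M) x - x + multiplier g x) = p j (H + multiplier D (x - P (Suc M) x))"
      unfolding l r by (auto simp: D_def max_def algebra_simps)
  qed
  have "norm H \<le> (\<Sum>n<Suc M. \<eta> * (2 * K * norm x))"
    unfolding H_def
  proof (rule order_trans[OF norm_sum sum_mono])
    fix n assume "n \<in> {..<Suc M}"
    then have "g n \<le> \<eta>" using monoD[OF g(1), of n M] switch(1) by simp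
    then show "norm (g n *\<^sub>R p n x) \<le> \<eta> * (2 * K * norm x)"
      using g(2)[of n] norm_coord_le[of n x] by (simp add: K_def mult_mono')
  qed
  moreover have "norm (multiplier D (x - P (Suc M) x))
      \<le> (\<eta> * (K + 2) + 2 * \<eta> * (K + 1)) * norm (x - P (Suc M) x)"
    unfolding K_def by (rule multiplier_tendsto(2)[OF bv_D])
  moreover have "norm (x - P (Suc M) x) \<le> (K + 1) * norm x"
    using norm_triangle_ineq4[of x "P (Suc M) x"] norm_partial_le[of "Suc M" x]
    by (simp add: K_def distrib_right)
  ultimately have "norm (H + multiplier D (x - P (Suc M) x))
      \<le> real (Suc M) * (\<eta> * (2 * K * norm x)) + (\<eta> * (K + 2) + 2 * \<eta> * (K + 1)) * ((K + 1) * norm x)"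
    using norm_triangle_ineq[of H "multiplier D (x - P (Suc M) x)"]
      mult_left_mono[of "norm (x - P (Suc M) x)" "(K + 1) * norm x" "\<eta> * (K + 2) + 2 * \<eta> * (K + 1)"]
      \<open>\<eta> \<ge> 0\<close> partial_bound_pos
    by (simp add: K_def)
  then show ?thesis
    unfolding split K_def by (simp add: algebra_simps)
qed

definition switch_const :: real where
  "switch_const = 2 * partial_bound + (3 * partial_bound + 4) * (partial_bound + 1)"

lemma norm_complement_switching_multiplier_le:
  assumes "mono g" "\<And>n. 0 \<le> g n" "\<And>n. g n \<le> 1" and "switches_at g M"
  shows "norm (P (Suc M) x - x + multiplier g x) \<le> switch_const * (1/2)^M * norm x"
proof -
  define \<eta> :: real where "\<eta> = (1/4) ^ Suc M"
  have "norm (P (Suc M) x - x + multiplier g x)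
    \<le> \<eta> * (real (Suc M) * (2 * partial_bound) + (3 * partial_bound + 4) * (partial_bound + 1)) * norm x"
    by (rule norm_complement_multiplier_le) (use assms in \<open>simp_all add: switches_at_def \<eta>_def\<close>)
  also have "\<dots> \<le> switch_const * (1/2)^M * norm x"
  proof (rule mult_right_mono)
    have "\<eta> * (real (Suc M) * (2 * partial_bound) + (3 * partial_bound + 4) * (partial_bound + 1))
        = (\<eta> * real (Suc M)) * (2 * partial_bound) + \<eta> * ((3 * partial_bound + 4) * (partial_bound + 1))"
      by (simp add: algebra_simps)
    also have "\<dots> \<le> (1/2)^M * (2 * partial_bound) + (1/2)^M * ((3 * partial_bound + 4) * (partial_bound + 1))"
      using quarter_power_bounds[of M] partial_bound_pos unfolding \<eta>_def
      by (intro add_mono mult_right_mono) auto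
    finally show "\<eta> * (real (Suc M) * (2 * partial_bound) + (3 * partial_bound + 4) * (partial_bound + 1))
        \<le> switch_const * (1/2)^M"
      by (simp add: switch_const_def algebra_simps)
  qed simp
  finally show ?thesis .
qed

lemma not_R_bounded_if_switching_multipliers:
  assumes notR: "\<not> R_bounded {P N | N. N \<ge> 1}"
    and in_F: "\<And>M. multiplier (g M) \<in> F"
    and g: "\<And>M. mono (g M)" "\<And>M n. 0 \<le> g M n" "\<And>M n. g M n \<le> 1"
    and switch: "\<And>M. switches_at (g M) M"
  shows "\<not> R_bounded F"
proof (rule not_R_bounded_if_approximates_complements[OF notR in_F])
  show "linear (multiplier (g M))" for M
    using bounded_linear_multiplier[OF bounded_variation_power[of "g M" 1]] g
    by (simp add: bounded_linear.linear)
  show "linear (P N)" for N by (rule linear_partial)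
  show "norm (P (Suc M) x - x + multiplier (g M) x) \<le> switch_const * (1/2)^M * norm x" for M x
    by (rule norm_complement_switching_multiplier_le[OF g switch])
qed

lemma op_exp_neg_multiplier:
  assumes powers: "\<And>k. bounded_variation (\<lambda>n. m n ^ k) \<beta> V"
    and exp: "bounded_variation (\<lambda>n. exp (- (t * m n))) \<beta>' V'"
  shows "op_exp_neg t (multiplier m) x = multiplier (\<lambda>n. exp (- (t * m n))) x"
proof (rule coord_ext)
  fix j
  define C where "C = (\<beta> * (partial_bound + 2) + V * (partial_bound + 1)) * norm x"
  define S where "S k = ((- t) ^ k / fact k) *\<^sub>R (multiplier m ^^ k) x" for k
  have "summable S"
  proof (rule summable_comparison_test[where g="\<lambda>k. C * (inverse (fact k) * \<bar>t\<bar> ^ k)"])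
    show "summable (\<lambda>k. C * (inverse (fact k) * \<bar>t\<bar> ^ k))"
      by (intro summable_mult summable_exp)
    have "norm (S k) = (\<bar>t\<bar> ^ k / fact k) * norm (multiplier (\<lambda>n. m n ^ k) x)" for k
      by (simp add: S_def multiplier_power[OF powers] power_abs)
    also have "\<dots> k \<le> (\<bar>t\<bar> ^ k / fact k) * C" for k
      unfolding C_def by (intro mult_left_mono multiplier_tendsto(2)[OF powers]) auto
    finally show "\<exists>N. \<forall>k\<ge>N. norm (S k) \<le> C * (inverse (fact k) * \<bar>t\<bar> ^ k)"
      by (auto simp: field_simps)
  qed
  have "p j (op_exp_neg t (multiplier m) x) = (\<Sum>k. p j (S k))"
    unfolding op_exp_neg_def S_def[symmetric]
    by (rule bounded_linear.suminf[OF bounded_linear_coord \<open>summable S\<close>])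
  also have "\<dots> = (\<Sum>k. (inverse (fact k) * (- (t * m j)) ^ k) *\<^sub>R p j x)"
    unfolding minus_mult_left power_mult_distrib
    by (simp add: S_def multiplier_power[OF powers] coord_multiplier[OF powers] linear_scale[OF linear_coord]
        power_mult_distrib divide_inverse mult_ac)
  also have "\<dots> = exp (- (t * m j)) *\<^sub>R p j x"
    by (simp add: suminf_scaleR_left[OF summable_exp] exp_def)
  finally show "p j (op_exp_neg t (multiplier m) x) = p j (multiplier (\<lambda>n. exp (- (t * m n))) x)"
    by (simp add: coord_multiplier[OF exp])
qed

lemma exp_inverse_not_R_bounded:
  assumes notR: "\<not> R_bounded {P N | N. N \<ge> 1}"
  shows "\<exists>a :: nat \<Rightarrow> real. mono a \<and> (\<forall>n. 0 < a n) \<and>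
           (\<exists>B :: 'a \<Rightarrow> 'a. bounded_linear B \<and>
              (\<forall>x. (\<lambda>N. \<Sum>n<N. (1 / a n) *\<^sub>R p n x) \<longlonglongrightarrow> B x) \<and>
              \<not> R_bounded {op_exp_neg t B | t. t \<ge> 0})"
proof (intro exI conjI allI)
  define a :: "nat \<Rightarrow> real" where "a n = 1 / decay n" for n
  show "mono a"
    using antimono_decay decay_pos by (auto simp: a_def mono_def antimono_def intro: divide_left_mono)
  show "0 < a n" for n using decay_pos[of n] by (simp add: a_def)
  have decay_powers: "bounded_variation (\<lambda>n. decay n ^ k) 1 2" for k
    using antimono_decay decay_pos decay_le_one by (intro bounded_variation_power) (auto intro: less_imp_le)
  have exp_decay: "bounded_variation (\<lambda>n. exp (- (t * decay n))) 1 2" if "t \<ge> 0" for t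
  proof -
    have "mono (\<lambda>n. exp (- (t * decay n)))"
      using that antimono_decay by (auto simp: mono_def antimono_def intro!: mult_left_mono)
    moreover have "\<bar>exp (- (t * decay n))\<bar> \<le> 1" for n
      using that decay_pos[of n] by simp
    ultimately show ?thesis using bounded_variation_mono by fastforce
  qed
  show "bounded_linear (multiplier decay)"
    using bounded_linear_multiplier[OF decay_powers[of 1]] by simp
  show "(\<lambda>N. \<Sum>n<N. (1 / a n) *\<^sub>R p n x) \<longlonglongrightarrow> multiplier decay x" for x
    using multiplier_tendsto(1)[OF decay_powers[of 1]] by (simp add: a_def)
  show "\<not> R_bounded {op_exp_neg t (multiplier decay) | t. t \<ge> 0}"
  proof (rule not_R_bounded_if_switching_multipliers[OF notR, where g="\<lambda>M n. exp (- (switch_time M * decay n))"])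
    show "multiplier (\<lambda>n. exp (- (switch_time M * decay n))) \<in> {op_exp_neg t (multiplier decay) | t. t \<ge> 0}" for M
    proof -
      have "op_exp_neg (switch_time M) (multiplier decay) = multiplier (\<lambda>n. exp (- (switch_time M * decay n)))"
        by (rule ext op_exp_neg_multiplier[OF decay_powers exp_decay[OF switch_time_nonneg]])+
      then show ?thesis
        by (intro CollectI exI[of _ "switch_time M"] conjI) (simp_all add: switch_time_nonneg)
    qed
    show "mono (\<lambda>n. exp (- (switch_time M * decay n)))" for M
      using antimono_decay switch_time_nonneg[of M]
      by (auto simp: mono_def antimono_def intro!: mult_left_mono)
    show "exp (- (switch_time M * decay n)) \<le> 1" for M n
      using switch_time_nonneg[of M] decay_pos[of n] by simp
  qed (simp_all add: switches_at_exp)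
qed

lemma ritt_power_not_R_bounded:
  assumes notR: "\<not> R_bounded {P N | N. N \<ge> 1}"
  shows "\<exists>c :: nat \<Rightarrow> real. mono c \<and> (\<forall>n. 0 < c n \<and> c n < 1) \<and>
           (\<exists>T :: 'a \<Rightarrow> 'a. bounded_linear T \<and>
              (\<forall>x. (\<lambda>N. \<Sum>n<N. c n *\<^sub>R p n x) \<longlonglongrightarrow> T x) \<and>
              (\<exists>M. \<forall>n x. norm ((T ^^ n) x) \<le> M * norm x) \<and>
              (\<exists>M. \<forall>n x. n \<ge> 1 \<longrightarrow> norm (real n *\<^sub>R (T ^^ n) (x - T x)) \<le> M * norm x) \<and>
              \<not> R_bounded {T ^^ n | n. True})"
proof (intro exI conjI allI impI)
  define c where "c n = 1 - decay n / 2" for n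
  define T where "T = multiplier c"
  show "mono c" using antimono_decay by (auto simp: c_def mono_def antimono_def)
  show c_pos: "0 < c n" and c_less: "c n < 1" for n
    using decay_pos[of n] decay_le_one[of n] by (auto simp: c_def)
  have c_powers: "bounded_variation (\<lambda>n. c n ^ k) 1 2" for k
    using \<open>mono c\<close> c_pos c_less by (intro bounded_variation_power) (auto intro: less_imp_le)
  have T_power: "(T ^^ k) x = multiplier (\<lambda>n. c n ^ k) x" for k x
    unfolding T_def by (rule multiplier_power[OF c_powers])
  show "bounded_linear T"
    using bounded_linear_multiplier[OF c_powers[of 1]] by (simp add: T_def)
  show "(\<lambda>N. \<Sum>n<N. c n *\<^sub>R p n x) \<longlonglongrightarrow> T x" for x
    using multiplier_tendsto(1)[OF c_powers[of 1]] by (simp add: T_def)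
  show "norm ((T ^^ n) x) \<le> (3 * partial_bound + 4) * norm x" for n x
    using multiplier_tendsto(2)[OF c_powers] by (simp add: T_power algebra_simps)
  have ritt_bv: "bounded_variation (\<lambda>n. ritt_symbol k (c n)) 2 4" for k
    using \<open>mono c\<close> c_pos c_less by (intro bounded_variation_ritt_symbol) (auto intro: less_imp_le)
  have "real k *\<^sub>R (T ^^ k) (x - T x) = multiplier (\<lambda>n. ritt_symbol k (c n)) x" for k x
  proof (rule coord_ext)
    fix j
    have "p j (x - T x) = (1 - c j) *\<^sub>R p j x"
      using coord_multiplier[OF c_powers[of 1]]
      by (simp add: T_def linear_diff[OF linear_coord] scaleR_diff_left)
    then have "p j (real k *\<^sub>R (T ^^ k) (x - T x)) = (real k * c j ^ k * (1 - c j)) *\<^sub>R p j x"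
      by (simp add: T_power coord_multiplier[OF c_powers] linear_scale[OF linear_coord])
    then show "p j (real k *\<^sub>R (T ^^ k) (x - T x)) = p j (multiplier (\<lambda>n. ritt_symbol k (c n)) x)"
      unfolding coord_multiplier[OF ritt_bv] by (simp add: ritt_symbol_def)
  qed
  then show "norm (real n *\<^sub>R (T ^^ n) (x - T x)) \<le> (2 * (partial_bound + 2) + 4 * (partial_bound + 1)) * norm x" for n x
    using multiplier_tendsto(2)[OF ritt_bv] by simp
  show "\<not> R_bounded {T ^^ n | n. True}"
  proof (rule not_R_bounded_if_switching_multipliers[OF notR, where g="\<lambda>M n. c n ^ switch_steps M"])
    show "multiplier (\<lambda>n. c n ^ switch_steps M) \<in> {T ^^ n | n. True}" for M
    proof -
      have "T ^^ switch_steps M = multiplier (\<lambda>n. c n ^ switch_steps M)"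
        by (rule ext T_power)+
      then show ?thesis by (intro CollectI exI[of _ "switch_steps M"]) simp
    qed
    show "mono (\<lambda>n. c n ^ switch_steps M)" for M
      using \<open>mono c\<close> c_pos by (auto simp: mono_def less_imp_le intro!: power_mono)
    show "c n ^ switch_steps M \<le> 1" for M n
      using c_pos[of n] c_less[of n] by (simp add: power_le_one)
    show "switches_at (\<lambda>n. c n ^ switch_steps M) M" for M
      using switches_at_power by (simp add: c_def)
  qed (use c_pos in \<open>simp add: less_imp_le\<close>)
qed

end

theorem theorem3:
  fixes J :: "'a::banach \<Rightarrow> 'a" and Xs :: "nat \<Rightarrow> 'a set"
  assumes "complex_structure J"
    and "schauder_decomposition J Xs"
    and "\<not> R_schauder J Xs"
  shows "(\<exists>a :: nat \<Rightarrow> real. mono a \<and> (\<forall>n. 0 < a n) \<and>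
           (\<exists>B :: 'a \<Rightarrow> 'a. bounded_linear B \<and>
              (\<forall>x. (\<lambda>N. \<Sum>n<N. (1 / a n) *\<^sub>R sd_coord Xs n x) \<longlonglongrightarrow> B x) \<and>
              \<not> R_bounded {op_exp_neg t B | t. t \<ge> 0}))
       \<and> (\<exists>c :: nat \<Rightarrow> real. mono c \<and> (\<forall>n. 0 < c n \<and> c n < 1) \<and>
           (\<exists>T :: 'a \<Rightarrow> 'a. bounded_linear T \<and>
              (\<forall>x. (\<lambda>N. \<Sum>n<N. c n *\<^sub>R sd_coord Xs n x) \<longlonglongrightarrow> T x) \<and>
              (\<exists>M. \<forall>n x. norm ((T ^^ n) x) \<le> M * norm x) \<and>
              (\<exists>M. \<forall>n x. n \<ge> 1 \<longrightarrow> norm (real n *\<^sub>R (T ^^ n) (x - T x)) \<le> M * norm x) \<and>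
              \<not> R_bounded {T ^^ n | n. True}))"
proof -
  interpret schauder_dec J Xs by unfold_locales (rule assms(2))
  have "\<not> R_bounded {sd_partial Xs N | N. N \<ge> 1}"
    using assms(2,3) by (simp add: R_schauder_def)
  then show ?thesis
    using exp_inverse_not_R_bounded ritt_power_not_R_bounded by blast
qed

end
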